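(* Let $\mathcal{I}\subseteq\mathcal{M}_m$ be decreasing, $r=\max_{u\in\mathcal{I}}\deg u$, and $f,g\in\mathcal{I}_r$ with $h=\gcd(f,g)$ and $\deg(h)\le r-2$. Then $$\Bigl|\mathrm{LTA}(m,2)_h\cdot h\cdot\Bigl(\mathrm{LTA}(m,2)_f\cdot\tfrac fh+\mathrm{LTA}(m,2)_g\cdot\tfrac gh\Bigr)\Bigr|=\bigl|\mathrm{LTA}(m,2)_h\cdot h\bigr|\cdot\Bigl|\mathrm{LTA}(m,2)_f\cdot\tfrac fh+\mathrm{LTA}(m,2)_g\cdot\tfrac gh\Bigr|.$$
   Context: $\mathcal{M}_m$: square-free monomials in $x_0,\dots,x_{m-1}$ in $\mathbf{R}_m=\mathbb{F}_2[x_0,\dots,x_{m-1}]/(x_i^2-x_i)$; $\operatorname{ind}(u)$ the variable indices, $\deg u=|\operatorname{ind}u|$, $\gcd$ has index set the intersection. For equal-degree monomials with increasing indices, $u\preceq_{sh}v$ iff componentwise $\le$; $u\preceq v$ iff $u\preceq_{sh}v^*\mid v$ for some $v^*$; $\mathcal{I}$ decreasing if $f\in\mathcal{I}$, $g\preceq f\Rightarrow g\in\mathcal{I}$; $\mathcal{I}_r$ its degree-$r$ elements. $\mathrm{LTA}(m,2)$: pairs $(\mathbf{B},\varepsilon)$, $\mathbf{B}=(b_{i,j})$ binary lower unitriangular, $\varepsilon\in\mathbb{F}_2^m$, acting on a monomial $u$ by $x_i\mapsto x_i+\sum_{j<i}b_{i,j}x_j+\varepsilon_i$ for $i\in\operatorname{ind}u$.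 $\mathrm{LTA}(m,2)_g$: subgroup with $\varepsilon_i=0$ for $i\notin\operatorname{ind}g$ and $b_{i,j}=0$ if $i\notin\operatorname{ind}g$ or $j\in\operatorname{ind}g$; for $u\mid g$, $\mathrm{LTA}(m,2)_g\cdot u=\{(\mathbf{B},\varepsilon)\cdot u:(\mathbf{B},\varepsilon)\in\mathrm{LTA}(m,2)_g\}$. For sets of polynomials $A+B=\{a+b\}$, $A\cdot B=\{ab\}$. *)

theory Defs
  imports Main
begin

text \<open>Elements of R_m = F_2[x_0..x_{m-1}]/(x_i^2 - x_i) are represented in the
  square-free monomial basis: a polynomial is the (finite) set of square-free
  monomials occurring with coefficient 1, and a square-free monomial is
  identified with its index set ind(u), a finite subset of {..<m}.\<close>

type_synonym monom = "nat set"
type_synonym rpoly = "nat set set"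

definition monomials :: "nat \<Rightarrow> monom set" where
  "monomials m = {u. u \<subseteq> {..<m}}"

definition padd :: "rpoly \<Rightarrow> rpoly \<Rightarrow> rpoly" where
  "padd p q = (p - q) \<union> (q - p)"

definition pmul :: "rpoly \<Rightarrow> rpoly \<Rightarrow> rpoly" where
  "pmul p q = {w. odd (card {(a, b). a \<in> p \<and> b \<in> q \<and> a \<union> b = w})}"

definition deg :: "monom \<Rightarrow> nat" where
  "deg u = card u"

definition sh_le :: "monom \<Rightarrow> monom \<Rightarrow> bool" where
  "sh_le u v \<longleftrightarrow> card u = card v \<and>
     (\<forall>k < card u. sorted_list_of_set u ! k \<le> sorted_list_of_set v ! k)"

definition mon_le :: "monom \<Rightarrow> monom \<Rightarrow> bool" where
  "mon_le u v \<longleftrightarrow> (\<exists>v'. v' \<subseteq> v \<and> sh_le u v')"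

definition decreasing :: "nat \<Rightarrow> monom set \<Rightarrow> bool" where
  "decreasing m I \<longleftrightarrow> I \<subseteq> monomials m \<and>
     (\<forall>f \<in> I. \<forall>g \<in> monomials m. mon_le g f \<longrightarrow> g \<in> I)"

text \<open>LTA(m,2): B is encoded by its strictly-lower entries b i j (j < i < m);
  the diagonal is implicitly 1 and entries above it 0.\<close>
definition LTA :: "nat \<Rightarrow> ((nat \<Rightarrow> nat \<Rightarrow> bool) \<times> (nat \<Rightarrow> bool)) set" where
  "LTA m = {(B, e). (\<forall>i j. B i j \<longrightarrow> j < i \<and> i < m) \<and> (\<forall>i. e i \<longrightarrow> i < m)}"

definition LTA_sub :: "nat \<Rightarrow> monom \<Rightarrow> ((nat \<Rightarrow> nat \<Rightarrow> bool) \<times> (nat \<Rightarrow> bool)) set" where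
  "LTA_sub m g = {(B, e) \<in> LTA m. (\<forall>i. i \<notin> g \<longrightarrow> \<not> e i) \<and>
                    (\<forall>i j. (i \<notin> g \<or> j \<in> g) \<longrightarrow> \<not> B i j)}"

text \<open>Image of x_i: x_i + sum_{j<i} b_{i,j} x_j + e_i.\<close>
definition lin :: "(nat \<Rightarrow> nat \<Rightarrow> bool) \<Rightarrow> (nat \<Rightarrow> bool) \<Rightarrow> nat \<Rightarrow> rpoly" where
  "lin B e i = insert {i} ({{j} | j. j < i \<and> B i j} \<union> (if e i then {{}} else {}))"

definition act :: "(nat \<Rightarrow> nat \<Rightarrow> bool) \<times> (nat \<Rightarrow> bool) \<Rightarrow> monom \<Rightarrow> rpoly" where
  "act \<sigma> u = foldr pmul (map (lin (fst \<sigma>) (snd \<sigma>)) (sorted_list_of_set u)) {{}}"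

definition orbit :: "nat \<Rightarrow> monom \<Rightarrow> monom \<Rightarrow> rpoly set" where
  "orbit m g u = {act \<sigma> u | \<sigma>. \<sigma> \<in> LTA_sub m g}"

definition set_add :: "rpoly set \<Rightarrow> rpoly set \<Rightarrow> rpoly set" where
  "set_add A B = {padd a b | a b. a \<in> A \<and> b \<in> B}"

definition set_mul :: "rpoly set \<Rightarrow> rpoly set \<Rightarrow> rpoly set" where
  "set_mul A B = {pmul a b | a b. a \<in> A \<and> b \<in> B}"

end

theory Submission imports Defs begin

text \<open>Evaluate polynomials at the 0/1 points of F_2^m. Evaluation turns padd and pmul into
  exclusive or and conjunction and separates polynomials, so it suffices to show that
  (a, s) \<mapsto> a * s is injective on the two factors. An element a of LTA(m,2)_h \<cdot> h evaluates to
  the product of the affine factors x_i + l_i(x), i \<in> h, where l_i only reads coordinates outside h,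
  while an element s of the sum does not depend on the coordinates in h. So every point can be
  moved inside h to a point where a = 1, and a * s = a' * s' forces s = s' and l_i = l'_i on the
  support of s. Since f/h and g/h both have degree at least 2, that support lies in no affine
  hyperplane; hence l_i = l'_i as affine forms and a = a'.\<close>

definition peval :: "rpoly \<Rightarrow> nat set \<Rightarrow> bool" where
  "peval p x \<longleftrightarrow> odd (card {w \<in> p. w \<subseteq> x})"
  \<comment> \<open>the value of p at the 0/1 point with support x\<close>

lemma odd_card_sym_diff:
  assumes "finite P" "finite Q"
  shows "odd (card (sym_diff P Q)) \<longleftrightarrow> odd (card P) \<noteq> odd (card Q)"
proof -
  have "card (sym_diff P Q) = card (P - Q) + card (Q - P)"
    using assms by (intro card_Un_disjoint) auto
  moreover have "card P = card (P \<inter> Q) + card (P - Q)" "card Q = card (P \<inter> Q) + card (Q - P)"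
    using assms card_Int_Diff by (metis, metis Int_commute)
  ultimately show ?thesis by presburger
qed

lemma peval_padd:
  assumes "finite p" "finite q"
  shows "peval (padd p q) x \<longleftrightarrow> peval p x \<noteq> peval q x"
proof -
  have "{w \<in> padd p q. w \<subseteq> x} = sym_diff {w \<in> p. w \<subseteq> x} {w \<in> q. w \<subseteq> x}"
    by (auto simp: padd_def)
  then show ?thesis
    unfolding peval_def using odd_card_sym_diff[of "{w \<in> p. w \<subseteq> x}" "{w \<in> q. w \<subseteq> x}"] assms
    by simp
qed

lemma finite_pmul:
  assumes "finite p" "finite q"
  shows "finite (pmul p q)"
proof -
  have "pmul p q \<subseteq> (\<lambda>(a, b). a \<union> b) ` (p \<times> q)"
  proof
    fix w assume "w \<in> pmul p q"
    then have "odd (card {(a, b). a \<in> p \<and> b \<in> q \<and> a \<union> b = w})"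
      by (simp add: pmul_def)
    then have "{(a, b). a \<in> p \<and> b \<in> q \<and> a \<union> b = w} \<noteq> {}"
      by (metis card.empty even_zero)
    then show "w \<in> (\<lambda>(a, b). a \<union> b) ` (p \<times> q)" by force
  qed
  then show ?thesis using assms finite_subset by blast
qed

text \<open>The pairs (a, b) of monomials of p and q below x are grouped by a \<union> b; a group of odd size
  is exactly a monomial of p * q below x.\<close>

lemma peval_pmul:
  assumes "finite p" "finite q"
  shows "peval (pmul p q) x \<longleftrightarrow> peval p x \<and> peval q x"
proof -
  define P where "P = {a \<in> p. a \<subseteq> x}"
  define Q where "Q = {b \<in> q. b \<subseteq> x}"
  define U where "U = (\<lambda>(a, b). a \<union> b :: nat set)"
  define N where "N w = {ab \<in> P \<times> Q. U ab = w}" for w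
  have fin: "finite (P \<times> Q)" using assms by (simp add: P_def Q_def)
  have N_pmul: "N w = {(a, b). a \<in> p \<and> b \<in> q \<and> a \<union> b = w}" if "w \<subseteq> x" for w
    using that by (auto simp: N_def U_def P_def Q_def)
  have "card (P \<times> Q) = (\<Sum>w \<in> U ` (P \<times> Q). card (N w))"
    using sum.group[OF fin finite_imageI[OF fin] subset_refl, where g = U and h = "\<lambda>_. 1::nat"]
    by (simp add: N_def)
  then have "odd (card P * card Q) \<longleftrightarrow> odd (card {w \<in> U ` (P \<times> Q). odd (card (N w))})"
    using even_sum_iff[OF finite_imageI[OF fin]] by (simp add: card_cartesian_product)
  moreover have "{w \<in> U ` (P \<times> Q). odd (card (N w))} = {w \<in> pmul p q. w \<subseteq> x}"
  proof (intro equalityI subsetI)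
    fix w assume "w \<in> {w \<in> U ` (P \<times> Q). odd (card (N w))}"
    moreover from this have "w \<subseteq> x" by (auto simp: U_def P_def Q_def)
    ultimately show "w \<in> {w \<in> pmul p q. w \<subseteq> x}" by (simp add: pmul_def N_pmul)
  next
    fix w assume w: "w \<in> {w \<in> pmul p q. w \<subseteq> x}"
    then have "odd (card (N w))" by (simp add: pmul_def N_pmul)
    then have "N w \<noteq> {}" by auto
    then show "w \<in> {w \<in> U ` (P \<times> Q). odd (card (N w))}"
      using \<open>odd (card (N w))\<close> by (auto simp: N_def)
  qed
  ultimately show ?thesis by (simp add: peval_def P_def Q_def)
qed

text \<open>A minimal monomial w of p + q is the only one of p + q below w, so p + q does not vanish
  at w.\<close>

lemma peval_inject:
  assumes "finite p" "finite q" "\<And>x. peval p x \<longleftrightarrow> peval q x"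
  shows "p = q"
proof (rule ccontr)
  assume "p \<noteq> q"
  then have "padd p q \<noteq> {}" by (auto simp: padd_def)
  moreover have "finite (padd p q)" using assms by (simp add: padd_def)
  ultimately obtain w where w: "w \<in> padd p q" "\<And>v. v \<in> padd p q \<Longrightarrow> v \<subseteq> w \<Longrightarrow> v = w"
    using finite_has_minimal by metis
  then have "{v \<in> padd p q. v \<subseteq> w} = {w}" by auto
  then have "peval (padd p q) w" by (simp add: peval_def)
  then show False using assms by (simp add: peval_padd)
qed

definition triangular :: "(nat \<Rightarrow> nat set \<Rightarrow> bool) \<Rightarrow> bool" where
  "triangular \<phi> \<longleftrightarrow> (\<forall>i x y. x \<inter> {..<i} = y \<inter> {..<i} \<longrightarrow> \<phi> i x = \<phi> i y)"

lemma triangular_solvable: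
  assumes "finite T" "triangular \<rho>"
  shows "\<exists>x. \<forall>i \<in> T. i \<in> x \<longleftrightarrow> \<rho> i x"
proof -
  have "\<exists>x. x \<subseteq> {..<n} \<and> (\<forall>i \<in> T \<inter> {..<n}. i \<in> x \<longleftrightarrow> \<rho> i x)" for n
  proof (induction n)
    case (Suc n)
    then obtain x where x: "x \<subseteq> {..<n}" "\<forall>i \<in> T \<inter> {..<n}. i \<in> x \<longleftrightarrow> \<rho> i x" by blast
    define x' where "x' = (if \<rho> n x then insert n x else x)"
    have "\<rho> i x' = \<rho> i x" if "i \<le> n" for i
      using assms(2) that unfolding triangular_def by (metis x'_def Int_insert_left lessThan_iff not_le)
    then have "i \<in> x' \<longleftrightarrow> \<rho> i x'" if "i \<in> T \<inter> {..<Suc n}" for i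
      using that x by (cases "i = n") (auto simp: x'_def)
    moreover have "x' \<subseteq> {..<Suc n}" using x by (auto simp: x'_def)
    ultimately show ?case by blast
  qed simp
  moreover obtain n where "T \<subseteq> {..<n}"
    using assms(1) by (auto simp: finite_nat_set_iff_bounded)
  ultimately show ?thesis by (metis inf.absorb1)
qed

definition prod_eval :: "nat set \<Rightarrow> (nat \<Rightarrow> nat set \<Rightarrow> bool) \<Rightarrow> nat set \<Rightarrow> bool" where
  "prod_eval F \<phi> x \<longleftrightarrow> (\<forall>i \<in> F. (i \<in> x) \<noteq> \<phi> i x)"
  \<comment> \<open>the value at x of the product of the factors x_i + \<phi>_i(x), i \<in> F\<close>

definition affinely_spanning :: "nat set set \<Rightarrow> bool" where
  "affinely_spanning P \<longleftrightarrow>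
     (\<forall>D c. finite D \<and> (D \<noteq> {} \<or> c) \<longrightarrow> (\<exists>x \<in> P. odd (card (D \<inter> x)) \<noteq> c))"
  \<comment> \<open>P lies in no affine hyperplane sum_{j \<in> D} x_j = c; the case D = {} says P \<noteq> {}\<close>

lemma affinely_spanningD:
  "affinely_spanning P \<Longrightarrow> finite D \<Longrightarrow> D \<noteq> {} \<or> c \<Longrightarrow> \<exists>x \<in> P. odd (card (D \<inter> x)) \<noteq> c"
  unfolding affinely_spanning_def by blast

lemma exists_prod_eval_one_zero:
  assumes "finite F" "finite E" "t \<in> G" "t \<notin> F \<union> E" "F \<inter> E = {}"
    and "triangular \<phi>F" "triangular \<phi>G" "triangular \<psi>"
  shows "\<exists>x. prod_eval F \<phi>F x \<and> \<not> prod_eval G \<phi>G x \<and> (\<forall>i \<in> E. i \<in> x \<longleftrightarrow> \<psi> i x)"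
proof -
  \<comment> \<open>solve for x coordinatewise: x_t spoils a factor of the G-product, every F-factor is 1\<close>
  define \<rho> where "\<rho> i x = (if i = t then \<phi>G i x else if i \<in> E then \<psi> i x else \<not> \<phi>F i x)" for i x
  have "\<rho> i x = \<rho> i y" if "x \<inter> {..<i} = y \<inter> {..<i}" for i x y
    using assms(6-8)[unfolded triangular_def, rule_format, OF that]
    by (cases "i = t") (simp_all add: \<rho>_def)
  then have "triangular \<rho>" unfolding triangular_def by blast
  moreover have "finite (insert t (F \<union> E))" using assms(1,2) by simp
  ultimately obtain x where x: "\<forall>i \<in> insert t (F \<union> E). i \<in> x \<longleftrightarrow> \<rho> i x"
    using triangular_solvable by blast
  have "prod_eval F \<phi>F x" "\<not> prod_eval G \<phi>G x" "\<forall>i \<in> E. i \<in> x \<longleftrightarrow> \<psi> i x"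
    using x assms(3-5) unfolding prod_eval_def \<rho>_def by auto
  then show ?thesis by blast
qed

lemma exists_prod_eval_one_zero_off_hyperplane:
  assumes "finite F" "2 \<le> card G" "F \<inter> G = {}" "triangular \<phi>F" "triangular \<phi>G"
    and "finite D" "D \<noteq> {} \<or> c" "D = {} \<or> Max D \<notin> F"
  shows "\<exists>x. prod_eval F \<phi>F x \<and> \<not> prod_eval G \<phi>G x \<and> odd (card (D \<inter> x)) \<noteq> c"
proof (cases "D = {}")
  case True
  have "G \<noteq> {}" using assms(2) by auto
  then obtain t where t: "t \<in> G" by blast
  then have "t \<notin> F \<union> {}" using assms(3) by blast
  then show ?thesis
    using exists_prod_eval_one_zero[OF assms(1) finite.emptyI t _ _ assms(4,5,4)] True assms(7)
    by simp
next
  case False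
  \<comment> \<open>the top variable d of the hyperplane is solved for last, so x can be pushed off it\<close>
  define d where "d = Max D"
  have d: "d \<in> D" "\<And>j. j \<in> D \<Longrightarrow> j \<le> d"
    using False assms(6) by (simp_all add: d_def)
  have "\<not> G \<subseteq> {d}" using assms(2) card_mono[of "{d}" G] by auto
  then obtain t where t: "t \<in> G" "t \<noteq> d" by blast
  define \<psi> where "\<psi> i x = (odd (card (D \<inter> {..<i} \<inter> x)) = c)" for i x
  have "D \<inter> {..<i} \<inter> x = D \<inter> {..<i} \<inter> y" if "x \<inter> {..<i} = y \<inter> {..<i}" for i x y
    using that by blast
  then have "triangular \<psi>" unfolding triangular_def \<psi>_def by metis
  moreover have "t \<notin> F \<union> {d}" "F \<inter> {d} = {}"
    using t assms(3,8) False by (auto simp: d_def)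
  ultimately obtain x where x: "prod_eval F \<phi>F x" "\<not> prod_eval G \<phi>G x" "d \<in> x \<longleftrightarrow> \<psi> d x"
    using exists_prod_eval_one_zero[OF assms(1) _ t(1) _ _ assms(4,5)] by blast
  have "D \<inter> x = (if d \<in> x then insert d (D \<inter> {..<d} \<inter> x) else D \<inter> {..<d} \<inter> x)"
    using d by (auto simp: less_le)
  then have "odd (card (D \<inter> x)) \<noteq> c"
    using x(3) assms(6) by (simp add: \<psi>_def)
  then show ?thesis using x by blast
qed

lemma affinely_spanning_prod_eval_neq:
  assumes "F \<inter> G = {}" "2 \<le> card F" "2 \<le> card G" "triangular \<phi>F" "triangular \<phi>G"
  shows "affinely_spanning {x. prod_eval F \<phi>F x \<noteq> prod_eval G \<phi>G x}"
  unfolding affinely_spanning_def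
proof (intro allI impI)
  fix D :: "nat set" and c assume D: "finite D \<and> (D \<noteq> {} \<or> c)"
  have fin: "finite F" "finite G"
    using assms(2,3) card.infinite[of F] card.infinite[of G] by linarith+
  have "\<exists>x. prod_eval F \<phi>F x \<noteq> prod_eval G \<phi>G x \<and> odd (card (D \<inter> x)) \<noteq> c"
  proof (cases "D = {} \<or> Max D \<notin> F")
    case True
    then obtain x where "prod_eval F \<phi>F x" "\<not> prod_eval G \<phi>G x" "odd (card (D \<inter> x)) \<noteq> c"
      using exists_prod_eval_one_zero_off_hyperplane[OF fin(1) assms(3,1,4,5), of D c] D by blast
    then show ?thesis by (intro exI[of _ x]) simp
  next
    case False
    then have "D = {} \<or> Max D \<notin> G" "G \<inter> F = {}" using assms(1) by blast+
    then obtain x where "prod_eval G \<phi>G x" "\<not> prod_eval F \<phi>F x" "odd (card (D \<inter> x)) \<noteq> c"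
      using exists_prod_eval_one_zero_off_hyperplane[OF fin(2) assms(2) _ assms(5,4), of D c] D by blast
    then show ?thesis by (intro exI[of _ x]) simp
  qed
  then show "\<exists>x \<in> {x. prod_eval F \<phi>F x \<noteq> prod_eval G \<phi>G x}. odd (card (D \<inter> x)) \<noteq> c"
    by simp
qed

definition tail_eval :: "(nat \<Rightarrow> nat \<Rightarrow> bool) \<times> (nat \<Rightarrow> bool) \<Rightarrow> nat \<Rightarrow> nat set \<Rightarrow> bool" where
  "tail_eval \<sigma> i x \<longleftrightarrow> odd (card {j. j < i \<and> fst \<sigma> i j \<and> j \<in> x}) \<noteq> snd \<sigma> i"
  \<comment> \<open>the value at x of sum_{j<i} b_{i,j} x_j + \<epsilon>_i, so that \<sigma> maps x_i to x_i + tail_eval \<sigma> i\<close>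

lemma triangular_tail_eval: "triangular (tail_eval \<sigma>)"
  unfolding triangular_def
proof (intro allI impI)
  fix i :: nat and x y assume "x \<inter> {..<i} = y \<inter> {..<i}"
  then have "{j. j < i \<and> fst \<sigma> i j \<and> j \<in> x} = {j. j < i \<and> fst \<sigma> i j \<and> j \<in> y}"
    by blast
  then show "tail_eval \<sigma> i x = tail_eval \<sigma> i y" by (simp add: tail_eval_def)
qed

lemma tail_eval_Diff:
  assumes "\<sigma> \<in> LTA_sub m u" "v \<subseteq> u"
  shows "tail_eval \<sigma> i (x - v) = tail_eval \<sigma> i x"
proof -
  have "{j. j < i \<and> fst \<sigma> i j \<and> j \<in> x - v} = {j. j < i \<and> fst \<sigma> i j \<and> j \<in> x}"
    using assms by (auto simp: LTA_sub_def)
  then show ?thesis by (simp add: tail_eval_def)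
qed

lemma LTA_sub_subset: "LTA_sub m u \<subseteq> LTA m"
  by (auto simp: LTA_sub_def)

lemma LTA_row_eq:
  assumes "\<sigma> \<in> LTA m" "\<sigma>' \<in> LTA m" "affinely_spanning P"
    and "\<And>x. x \<in> P \<Longrightarrow> tail_eval \<sigma> i x = tail_eval \<sigma>' i x"
  shows "fst \<sigma> i = fst \<sigma>' i" "snd \<sigma> i = snd \<sigma>' i"
proof -
  define D where "D = {j. j < i \<and> fst \<sigma> i j \<noteq> fst \<sigma>' i j}"
  define c where "c = (snd \<sigma> i \<noteq> snd \<sigma>' i)"
  have parity: "odd (card (D \<inter> x)) = c" if "x \<in> P" for x
  proof -
    define A where "A = {j. j < i \<and> fst \<sigma> i j \<and> j \<in> x}"
    define B where "B = {j. j < i \<and> fst \<sigma>' i j \<and> j \<in> x}"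
    have "sym_diff A B = D \<inter> x" by (auto simp: A_def B_def D_def)
    moreover have "odd (card (sym_diff A B)) \<longleftrightarrow> odd (card A) \<noteq> odd (card B)"
      by (rule odd_card_sym_diff) (simp_all add: A_def B_def)
    ultimately show ?thesis
      using assms(4)[OF that] by (auto simp: tail_eval_def c_def A_def B_def)
  qed
  have "\<not> (D \<noteq> {} \<or> c)"
  proof
    assume "D \<noteq> {} \<or> c"
    moreover have "finite D" by (simp add: D_def)
    ultimately obtain x where "x \<in> P" "odd (card (D \<inter> x)) \<noteq> c"
      using affinely_spanningD[OF assms(3)] by metis
    then show False using parity by blast
  qed
  then have "D = {}" "\<not> c" by blast+
  moreover have "fst \<sigma> i j \<Longrightarrow> j < i" "fst \<sigma>' i j \<Longrightarrow> j < i" for j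
    using assms(1,2) by (auto simp: LTA_def)
  ultimately have "fst \<sigma> i j = fst \<sigma>' i j" for j
    unfolding D_def by (cases "j < i") blast+
  then show "fst \<sigma> i = fst \<sigma>' i" by blast
  show "snd \<sigma> i = snd \<sigma>' i" using \<open>\<not> c\<close> by (simp add: c_def)
qed

lemma finite_lin: "finite (lin B e i)"
proof -
  have "{{j} | j. j < i \<and> B i j} = (\<lambda>j. {j}) ` {j. j < i \<and> B i j}" by auto
  then show ?thesis by (simp add: lin_def)
qed

lemma peval_lin:
  "peval (lin B e i) x \<longleftrightarrow> (i \<in> x) \<noteq> (odd (card {j. j < i \<and> B i j \<and> j \<in> x}) \<noteq> e i)"
proof -
  define J where "J = {j. j < i \<and> B i j \<and> j \<in> x}"
  define K where "K = (if i \<in> x then {{i}} else {}) \<union> (if e i then {{}} else {})"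
  have "{w \<in> lin B e i. w \<subseteq> x} = K \<union> (\<lambda>j. {j}) ` J"
    by (auto simp: lin_def J_def K_def)
  moreover have "card (K \<union> (\<lambda>j. {j}) ` J) = card K + card J"
    by (subst card_Un_disjoint) (auto simp: K_def J_def card_image)
  moreover have "card K = (if i \<in> x then 1 else 0) + (if e i then 1 else 0)"
    by (auto simp: K_def)
  ultimately show ?thesis unfolding peval_def J_def by auto
qed

lemma finite_foldr_pmul: "\<forall>p \<in> set ps. finite p \<Longrightarrow> finite (foldr pmul ps {{}})"
  by (induction ps) (simp_all add: finite_pmul)

lemma peval_foldr_pmul:
  "\<forall>p \<in> set ps. finite p \<Longrightarrow> peval (foldr pmul ps {{}}) x \<longleftrightarrow> (\<forall>p \<in> set ps. peval p x)"
proof (induction ps)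
  case Nil
  have "{w. w = {} \<and> w \<subseteq> x} = {{}}" by auto
  then show ?case by (simp add: peval_def)
qed (simp add: peval_pmul finite_foldr_pmul)

lemma finite_act: "finite (act \<sigma> u)"
  unfolding act_def by (simp add: finite_foldr_pmul finite_lin)

lemma peval_act: "finite u \<Longrightarrow> peval (act \<sigma> u) x \<longleftrightarrow> prod_eval u (tail_eval \<sigma>) x"
  unfolding act_def prod_eval_def
  by (simp add: peval_foldr_pmul finite_lin peval_lin tail_eval_def)

lemma act_cong:
  assumes "\<And>i. i \<in> u \<Longrightarrow> fst \<sigma> i = fst \<sigma>' i \<and> snd \<sigma> i = snd \<sigma>' i" "finite u"
  shows "act \<sigma> u = act \<sigma>' u"
  unfolding act_def lin_def using assms by (auto intro!: arg_cong[where f = "\<lambda>l. foldr pmul l _"])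

lemma prod_eval_tail_eval_Diff:
  assumes "\<sigma> \<in> LTA_sub m u" "v \<subseteq> u" "F \<inter> v = {}"
  shows "prod_eval F (tail_eval \<sigma>) (x - v) = prod_eval F (tail_eval \<sigma>) x"
  using assms tail_eval_Diff[OF assms(1,2)] unfolding prod_eval_def by blast

lemma exists_prod_eval_tail_eval:
  assumes "\<sigma> \<in> LTA_sub m h"
  shows "\<exists>x'. x' - h = x - h \<and> prod_eval h (tail_eval \<sigma>) x'"
proof -
  define x' where "x' = (x - h) \<union> {i \<in> h. \<not> tail_eval \<sigma> i x}"
  have "x' - h = x - h" by (auto simp: x'_def)
  then have "tail_eval \<sigma> i x' = tail_eval \<sigma> i x" for i
    using tail_eval_Diff[OF assms subset_refl] by metis
  then have "prod_eval h (tail_eval \<sigma>) x'"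
    by (auto simp: prod_eval_def x'_def)
  with \<open>x' - h = x - h\<close> show ?thesis by blast
qed

lemma pmul_act_eqD:
  assumes "\<sigma> \<in> LTA_sub m h" "\<sigma>' \<in> LTA_sub m h" "finite h" "finite s" "finite s'"
    and "\<And>x. peval s (x - h) = peval s x" "\<And>x. peval s' (x - h) = peval s' x"
    and "pmul (act \<sigma> h) s = pmul (act \<sigma>' h) s'" "peval s x"
  shows "peval s' x" "\<forall>i \<in> h. tail_eval \<sigma> i x = tail_eval \<sigma>' i x"
proof -
  obtain x' where x': "x' - h = x - h" "prod_eval h (tail_eval \<sigma>) x'"
    using exists_prod_eval_tail_eval[OF assms(1)] by blast
  have "peval s x'" using assms(6,9) x'(1) by metis
  then have "peval (pmul (act \<sigma> h) s) x'"
    using x'(2) assms(3,4) by (simp add: peval_pmul finite_act peval_act)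
  then have "prod_eval h (tail_eval \<sigma>') x'" "peval s' x'"
    using assms(3,5,8) by (simp_all add: peval_pmul finite_act peval_act)
  then show "peval s' x"
    using assms(7) x'(1) by metis
  have "tail_eval \<sigma> i x' = tail_eval \<sigma> i x" "tail_eval \<sigma>' i x' = tail_eval \<sigma>' i x" for i
    using tail_eval_Diff[OF assms(1) subset_refl] tail_eval_Diff[OF assms(2) subset_refl] x'(1)
    by metis+
  then show "\<forall>i \<in> h. tail_eval \<sigma> i x = tail_eval \<sigma>' i x"
    using x'(2) \<open>prod_eval h (tail_eval \<sigma>') x'\<close> unfolding prod_eval_def by blast
qed

lemma inj_on_pmul_orbit:
  assumes "finite h"
    and "\<And>s. s \<in> S \<Longrightarrow> finite s \<and> (\<forall>x. peval s (x - h) = peval s x)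
                        \<and> affinely_spanning {x. peval s x}"
  shows "inj_on (\<lambda>(a, s). pmul a s) (orbit m h h \<times> S)"
proof (rule inj_onI)
  fix p q assume "p \<in> orbit m h h \<times> S" "q \<in> orbit m h h \<times> S"
    and "(\<lambda>(a, s). pmul a s) p = (\<lambda>(a, s). pmul a s) q"
  moreover obtain a s a' s' where pq: "p = (a, s)" "q = (a', s')" by fastforce
  ultimately have "(a, s) \<in> orbit m h h \<times> S" "(a', s') \<in> orbit m h h \<times> S"
    and eq: "pmul a s = pmul a' s'" by simp_all
  then obtain \<sigma> \<sigma>' where \<sigma>: "\<sigma> \<in> LTA_sub m h" "a = act \<sigma> h" "\<sigma>' \<in> LTA_sub m h" "a' = act \<sigma>' h"
    and s: "s \<in> S" "s' \<in> S"
    by (auto simp: orbit_def)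
  have fin: "finite s" "finite s'"
    and indep: "\<And>x. peval s (x - h) = peval s x" "\<And>x. peval s' (x - h) = peval s' x"
    and span: "affinely_spanning {x. peval s x}"
    using assms(2)[OF s(1)] assms(2)[OF s(2)] by blast+
  have eq': "pmul (act \<sigma> h) s = pmul (act \<sigma>' h) s'" using eq \<sigma> by simp
  note cancel = pmul_act_eqD[OF \<sigma>(1,3) assms(1) fin indep eq']
    pmul_act_eqD[OF \<sigma>(3,1) assms(1) fin(2,1) indep(2,1) eq'[symmetric]]
  have "peval s x \<longleftrightarrow> peval s' x" for x
    using cancel(1)[of x] cancel(3)[of x] by blast
  then have "s = s'" using peval_inject[OF fin] by blast
  moreover have "fst \<sigma> i = fst \<sigma>' i \<and> snd \<sigma> i = snd \<sigma>' i" if "i \<in> h" for i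
  proof -
    have "\<sigma> \<in> LTA m" "\<sigma>' \<in> LTA m" using \<sigma>(1,3) LTA_sub_subset by blast+
    moreover have "\<And>x. x \<in> {x. peval s x} \<Longrightarrow> tail_eval \<sigma> i x = tail_eval \<sigma>' i x"
      using cancel(2) \<open>i \<in> h\<close> by blast
    ultimately show "fst \<sigma> i = fst \<sigma>' i \<and> snd \<sigma> i = snd \<sigma>' i"
      using LTA_row_eq[OF _ _ span] by blast
  qed
  then have "a = a'"
    using act_cong[OF _ assms(1)] \<sigma>(2,4) by blast
  ultimately show "p = q" using pq by simp
qed

lemma set_add_orbit_props:
  assumes "finite f" "finite g" "h = f \<inter> g" "2 \<le> card (f - h)" "2 \<le> card (g - h)"
    and "s \<in> set_add (orbit m f (f - h)) (orbit m g (g - h))"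
  shows "finite s \<and> (\<forall>x. peval s (x - h) = peval s x) \<and> affinely_spanning {x. peval s x}"
proof -
  obtain \<tau> \<rho> where \<tau>: "\<tau> \<in> LTA_sub m f" "\<rho> \<in> LTA_sub m g"
    and s: "s = padd (act \<tau> (f - h)) (act \<rho> (g - h))"
    using assms(6) by (auto simp: set_add_def orbit_def)
  have peval_s: "peval s x \<longleftrightarrow>
      prod_eval (f - h) (tail_eval \<tau>) x \<noteq> prod_eval (g - h) (tail_eval \<rho>) x" for x
    using assms(1,2) by (simp add: s peval_padd finite_act peval_act)
  have "finite s" by (simp add: s padd_def finite_act)
  moreover have "peval s (x - h) = peval s x" for x
    unfolding peval_s using prod_eval_tail_eval_Diff[OF \<tau>(1)] prod_eval_tail_eval_Diff[OF \<tau>(2)]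
      assms(3) by (metis Diff_disjoint inf_commute inf_le1 inf_le2)
  moreover have "affinely_spanning {x. peval s x}"
    unfolding peval_s using affinely_spanning_prod_eval_neq assms(3-5) triangular_tail_eval
    by (metis Diff_Int_distrib2 Diff_cancel Int_Diff inf_commute)
  ultimately show ?thesis by blast
qed

lemma card_set_mul:
  assumes "inj_on (\<lambda>(a, b). pmul a b) (A \<times> B)"
  shows "card (set_mul A B) = card A * card B"
proof -
  have "set_mul A B = (\<lambda>(a, b). pmul a b) ` (A \<times> B)"
    by (force simp: set_mul_def)
  then show ?thesis
    using assms by (simp add: card_image card_cartesian_product)
qed

theorem mainTheorem13:
  fixes m :: nat and I :: "monom set" and f g h :: monom and r :: nat
  assumes "decreasing m I"
    and "r = Max (deg ` I)"
    and "f \<in> I" and "g \<in> I" and "deg f = r" and "deg g = r"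
    and "h = f \<inter> g"
    and "deg h + 2 \<le> r"
  shows "card (set_mul (orbit m h h)
                 (set_add (orbit m f (f - h)) (orbit m g (g - h))))
       = card (orbit m h h) * card (set_add (orbit m f (f - h)) (orbit m g (g - h)))"
proof -
  have "f \<subseteq> {..<m}" "g \<subseteq> {..<m}"
    using assms(1,3,4) by (auto simp: decreasing_def monomials_def)
  then have fin: "finite f" "finite g" "finite h"
    using assms(7) finite_subset[OF _ finite_lessThan] by auto
  have card: "2 \<le> card (f - h)" "2 \<le> card (g - h)"
    using assms(5-8) fin card_Diff_subset[of h f] card_Diff_subset[of h g] by (auto simp: deg_def)
  show ?thesis
    by (rule card_set_mul, rule inj_on_pmul_orbit[OF fin(3)],
        rule set_add_orbit_props[OF fin(1,2) assms(7) card])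
qed

end
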